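(* Let $G=(V,E)$ be a finite graph (parallel edges and loops allowed) and $e\neq f$ edges of $G$. In every monomial appearing in $\mathcal{M}_{ef}(1)$, and in every monomial appearing in $\sum_{\beta,\gamma}\mathbf{x}^{\beta}\mathbf{x}^{\gamma}\sum_{\mathbf{m}\in B_{\beta,\gamma}}\mathbf{m}$ (sum over ordered pairs of disjoint subsets $\beta,\gamma$ of $E\setminus\{e,f\}$), each variable $x_g$ has degree at most two.
   Context: Let $\{x_g : g\in E\}$ be variables. For $F\subseteq E$ write $\mathbf{x}^F=\prod_{g\in F}x_g$ and $k(F)$ for the number of connected components of $(V,F)$. For $A,B\subseteq E$ set $\mathcal{T}_A^B=\sum_{F\subseteq E:\,A\subseteq F,\,F\cap B=\varnothing}\mathbf{x}^F q^{k(F)}$; $\mathcal{T}_e^f=\mathcal{T}_{\{e\}}^{\{f\}}$, $\mathcal{T}_f^e=\mathcal{T}_{\{f\}}^{\{e\}}$, $\mathcal{T}_{ef}=\mathcal{T}_{\{e,f\}}^{\varnothing}$, $\mathcal{T}^{ef}=\mathcal{T}_{\varnothing}^{\{e,f\}}$, and $\mathcal{M}_{ef}(q)=(\mathcal{T}_e^f\mathcal{T}_f^e-\mathcal{T}_{ef}\mathcal{T}^{ef})/(x_ex_f(1-q))$, a polynomial. Let $E^{ef}=E\setminus\{e,f\}$. A subset $F\subseteq E^{ef}$ is a paracel if $k(F+e)=k(F+f)=k(F)-1$ and $(V,F+e)$, $(V,F+f)$ have the same connected components; an edge of $E^{ef}\setminus F$ is a smoot for paracel $F$ if it joins the same two components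 of $(V,F)$ as $e$ and $f$. For disjoint $\beta,\gamma\subseteq E^{ef}$, $A_{\beta,\gamma}$ is the set of $\alpha\subseteq E^{ef}$ disjoint from $\beta,\gamma$ with $\gamma\cup\alpha$ a paracel and every edge of $\beta$ a smoot for $\gamma\cup\alpha$; $\alpha,\alpha'\in A_{\beta,\gamma}$ are twins if $\alpha\cap\alpha'\in A_{\beta,\gamma}$; $B_{\beta,\gamma}$ is the set of distinct monomials $\mathbf{x}^{\alpha}\mathbf{x}^{\alpha'}$ with $\alpha,\alpha'$ twins. *)

theory Defs
  imports "HOL-Library.Poly_Mapping" "HOL-Computational_Algebra.Polynomial"
begin

text \<open>A finite multigraph: vertex set V, edge set E, each edge g has endpoints ends g
  (a pair; loops are edges with equal endpoints, parallel edges are distinct edge names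
  with the same endpoints).\<close>

type_synonym 'e monomial = "'e \<Rightarrow>\<^sub>0 nat"
text \<open>Polynomials in the variables x_g (g an edge) with coefficients in Z[q].\<close>
type_synonym 'e qpoly = "'e monomial \<Rightarrow>\<^sub>0 int poly"
type_synonym 'e zpoly = "'e monomial \<Rightarrow>\<^sub>0 int"

definition adj :: "'v set \<Rightarrow> ('e \<Rightarrow> 'v \<times> 'v) \<Rightarrow> 'e set \<Rightarrow> ('v \<times> 'v) set" where
  "adj V ends F = {(u,v). u \<in> V \<and> v \<in> V \<and>
      (\<exists>g\<in>F. ends g = (u,v) \<or> ends g = (v,u))}"

definition conn :: "'v set \<Rightarrow> ('e \<Rightarrow> 'v \<times> 'v) \<Rightarrow> 'e set \<Rightarrow> ('v \<times> 'v) set" where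
  "conn V ends F = (adj V ends F)\<^sup>* \<inter> (V \<times> V)"

definition comps :: "'v set \<Rightarrow> ('e \<Rightarrow> 'v \<times> 'v) \<Rightarrow> 'e set \<Rightarrow> 'v set set" where
  "comps V ends F = V // conn V ends F"

definition ncomp :: "'v set \<Rightarrow> ('e \<Rightarrow> 'v \<times> 'v) \<Rightarrow> 'e set \<Rightarrow> nat" where
  "ncomp V ends F = card (comps V ends F)"

definition comp_of :: "'v set \<Rightarrow> ('e \<Rightarrow> 'v \<times> 'v) \<Rightarrow> 'e set \<Rightarrow> 'v \<Rightarrow> 'v set" where
  "comp_of V ends F v = conn V ends F `` {v}"

definition xmon :: "'e set \<Rightarrow> 'e monomial" where
  "xmon F = (\<Sum>g\<in>F. Poly_Mapping.single g 1)"

definition xvar :: "'e \<Rightarrow> 'e qpoly" where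
  "xvar g = Poly_Mapping.single (Poly_Mapping.single g 1) 1"

definition Tpoly :: "'v set \<Rightarrow> 'e set \<Rightarrow> ('e \<Rightarrow> 'v \<times> 'v) \<Rightarrow> 'e set \<Rightarrow> 'e set \<Rightarrow> 'e qpoly" where
  "Tpoly V E ends A B = (\<Sum>F\<in>{F. F \<subseteq> E \<and> A \<subseteq> F \<and> F \<inter> B = {}}.
      Poly_Mapping.single (xmon F) (monom 1 (ncomp V ends F)))"

text \<open>M_ef(q) = (T_e^f T_f^e - T_ef T^ef) / (x_e x_f (1-q)), i.e. the polynomial P with
  x_e x_f (1-q) P = T_e^f T_f^e - T_ef T^ef\<close>
definition Mpoly :: "'v set \<Rightarrow> 'e set \<Rightarrow> ('e \<Rightarrow> 'v \<times> 'v) \<Rightarrow> 'e \<Rightarrow> 'e \<Rightarrow> 'e qpoly" where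
  "Mpoly V E ends e f = (THE P.
     Tpoly V E ends {e} {f} * Tpoly V E ends {f} {e} - Tpoly V E ends {e,f} {} * Tpoly V E ends {} {e,f}
     = xvar e * xvar f * Poly_Mapping.single 0 (1 - [:0,1:]) * P)"

definition eval_q1 :: "'e qpoly \<Rightarrow> 'e zpoly" where
  "eval_q1 P = Poly_Mapping.map (\<lambda>c. poly c 1) P"

definition paracel :: "'v set \<Rightarrow> 'e set \<Rightarrow> ('e \<Rightarrow> 'v \<times> 'v) \<Rightarrow> 'e \<Rightarrow> 'e \<Rightarrow> 'e set \<Rightarrow> bool" where
  "paracel V E ends e f F \<longleftrightarrow> F \<subseteq> E - {e,f} \<and>
     ncomp V ends (insert e F) = ncomp V ends F - 1 \<and>
     ncomp V ends (insert f F) = ncomp V ends F - 1 \<and>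
     comps V ends (insert e F) = comps V ends (insert f F)"

definition smoot :: "'v set \<Rightarrow> 'e set \<Rightarrow> ('e \<Rightarrow> 'v \<times> 'v) \<Rightarrow> 'e \<Rightarrow> 'e \<Rightarrow> 'e set \<Rightarrow> 'e \<Rightarrow> bool" where
  "smoot V E ends e f F g \<longleftrightarrow> g \<in> (E - {e,f}) - F \<and>
     (let cs = (\<lambda>h. {comp_of V ends F (fst (ends h)), comp_of V ends F (snd (ends h))})
      in cs g = cs e \<and> cs g = cs f)"

definition Aset :: "'v set \<Rightarrow> 'e set \<Rightarrow> ('e \<Rightarrow> 'v \<times> 'v) \<Rightarrow> 'e \<Rightarrow> 'e \<Rightarrow> 'e set \<Rightarrow> 'e set \<Rightarrow> 'e set set" where
  "Aset V E ends e f \<beta> \<gamma> = {\<alpha>. \<alpha> \<subseteq> E - {e,f} \<and> \<alpha> \<inter> \<beta> = {} \<and> \<alpha> \<inter> \<gamma> = {} \<and>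
     paracel V E ends e f (\<gamma> \<union> \<alpha>) \<and> (\<forall>g\<in>\<beta>. smoot V E ends e f (\<gamma> \<union> \<alpha>) g)}"

definition twins :: "'v set \<Rightarrow> 'e set \<Rightarrow> ('e \<Rightarrow> 'v \<times> 'v) \<Rightarrow> 'e \<Rightarrow> 'e \<Rightarrow> 'e set \<Rightarrow> 'e set \<Rightarrow> 'e set \<Rightarrow> 'e set \<Rightarrow> bool" where
  "twins V E ends e f \<beta> \<gamma> \<alpha> \<alpha>' \<longleftrightarrow> \<alpha> \<in> Aset V E ends e f \<beta> \<gamma> \<and> \<alpha>' \<in> Aset V E ends e f \<beta> \<gamma> \<and>
     \<alpha> \<inter> \<alpha>' \<in> Aset V E ends e f \<beta> \<gamma>"

definition Bset :: "'v set \<Rightarrow> 'e set \<Rightarrow> ('e \<Rightarrow> 'v \<times> 'v) \<Rightarrow> 'e \<Rightarrow> 'e \<Rightarrow> 'e set \<Rightarrow> 'e set \<Rightarrow> 'e monomial set" where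
  "Bset V E ends e f \<beta> \<gamma> = {xmon \<alpha> + xmon \<alpha>' | \<alpha> \<alpha>'. twins V E ends e f \<beta> \<gamma> \<alpha> \<alpha>'}"

definition Spoly :: "'v set \<Rightarrow> 'e set \<Rightarrow> ('e \<Rightarrow> 'v \<times> 'v) \<Rightarrow> 'e \<Rightarrow> 'e \<Rightarrow> 'e zpoly" where
  "Spoly V E ends e f = (\<Sum>(\<beta>,\<gamma>)\<in>{(\<beta>,\<gamma>). \<beta> \<subseteq> E - {e,f} \<and> \<gamma> \<subseteq> E - {e,f} \<and> \<beta> \<inter> \<gamma> = {}}.
      Poly_Mapping.single (xmon \<beta> + xmon \<gamma>) 1 *
      (\<Sum>m\<in>Bset V E ends e f \<beta> \<gamma>. Poly_Mapping.single m 1))"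

end

theory Submission
  imports Defs
begin

text \<open>Splitting each T by whether it contains e and f, both products in the numerator of
  M_ef become sums of x_e x_f x^A x^B q^n over pairs A, B of subsets of E - {e,f}, and the
  two exponents n belonging to the same pair differ by a multiple of 1 - q. Hence M_ef is a
  combination of monomials x^A x^B, in which no variable has degree above two. The
  monomials of the second sum are x^\<beta> x^\<gamma> x^\<alpha> x^\<alpha>' with \<beta>, \<gamma> disjoint and \<alpha>, \<alpha>' disjoint
  from both, so the same bound holds there.\<close>

lemma lookup_single_mult_add:
  fixes s m :: "'a::cancel_comm_monoid_add" and c :: "'b::comm_semiring_1"
  shows "Poly_Mapping.lookup (Poly_Mapping.single s c * P) (s + m) = c * Poly_Mapping.lookup P m"
proof -
  have "Poly_Mapping.lookup (Poly_Mapping.single s c * P) (s + m)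
     = (\<Sum>l. (c when s = l) * (\<Sum>q. Poly_Mapping.lookup P q when s + m = l + q))"
    by (simp add: lookup_mult lookup_single)
  also have "\<dots> = (\<Sum>l. (c * (\<Sum>q. Poly_Mapping.lookup P q when s + m = s + q)) when s = l)"
    by (rule Sum_any.cong) (simp add: when_def)
  also have "\<dots> = c * (\<Sum>q. Poly_Mapping.lookup P q when q = m)"
    by (simp add: eq_commute[of m])
  finally show ?thesis by simp
qed

lemma single_mult_left_cancel:
  fixes s :: "'a::cancel_comm_monoid_add" and c :: "'b::idom"
  assumes "c \<noteq> 0" and "Poly_Mapping.single s c * P = Poly_Mapping.single s c * Q"
  shows "P = Q"
proof (rule poly_mapping_eqI)
  fix m
  have "c * Poly_Mapping.lookup P m = c * Poly_Mapping.lookup Q m"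
    using assms(2) by (metis lookup_single_mult_add)
  with assms(1) show "Poly_Mapping.lookup P m = Poly_Mapping.lookup Q m" by simp
qed

lemma one_minus_dvd_power_diff:
  fixes x :: "'a::comm_ring_1"
  shows "(1 - x) dvd (x ^ a - x ^ b)"
proof -
  have "x ^ a - x ^ b = (1 - x ^ b) - (1 - x ^ a)" by simp
  then show ?thesis by (simp add: one_diff_power_eq)
qed

lemma lookup_xmon: "Poly_Mapping.lookup (xmon X) g = (if finite X \<and> g \<in> X then 1 else 0)"
  by (cases "finite X") (simp_all add: xmon_def lookup_sum lookup_single when_def)

lemma xmon_union: "finite A \<Longrightarrow> finite B \<Longrightarrow> A \<inter> B = {} \<Longrightarrow> xmon (A \<union> B) = xmon A + xmon B"
  by (simp add: xmon_def sum.union_disjoint)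

lemma xvar_mult_xvar: "xvar e * xvar f * Poly_Mapping.single 0 c = Poly_Mapping.single (xmon {e,f}) c"
  if "e \<noteq> f"
  using that by (simp add: xvar_def xmon_def mult_single)

lemma Mpoly_eqI:
  assumes "e \<noteq> f"
    and "Tpoly V E ends {e} {f} * Tpoly V E ends {f} {e} - Tpoly V E ends {e,f} {} * Tpoly V E ends {} {e,f}
      = xvar e * xvar f * Poly_Mapping.single 0 (1 - [:0,1:]) * P"
  shows "Mpoly V E ends e f = P"
proof -
  have nonzero: "1 - [:0,1:] \<noteq> (0 :: int poly)"
    by (metis diff_zero one_neq_zero poly_0 poly_1 poly_diff poly_pCons mult_zero_left add_0)
  note eq = assms(2)[unfolded xvar_mult_xvar[OF assms(1)]]
  show ?thesis
    unfolding Mpoly_def xvar_mult_xvar[OF assms(1)]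
  proof (rule the_equality)
    fix Q
    assume "Tpoly V E ends {e} {f} * Tpoly V E ends {f} {e} - Tpoly V E ends {e,f} {} * Tpoly V E ends {} {e,f}
      = Poly_Mapping.single (xmon {e,f}) (1 - [:0,1:]) * Q"
    with eq nonzero show "Q = P" by (metis single_mult_left_cancel)
  qed (rule eq)
qed

lemma Tpoly_split:
  assumes "finite E" "{e,f} \<subseteq> E" "A0 \<union> B0 = {e,f}" "A0 \<inter> B0 = {}"
  shows "Tpoly V E ends A0 B0 = (\<Sum>A\<in>Pow (E-{e,f}).
     Poly_Mapping.single (xmon A0 + xmon A) (monom 1 (ncomp V ends (A0 \<union> A))))"
proof -
  have image: "{F. F \<subseteq> E \<and> A0 \<subseteq> F \<and> F \<inter> B0 = {}} = (\<lambda>A. A0 \<union> A) ` Pow (E-{e,f})"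
  proof (intro set_eqI iffI)
    fix F assume "F \<in> {F. F \<subseteq> E \<and> A0 \<subseteq> F \<and> F \<inter> B0 = {}}"
    then have "F = A0 \<union> (F - {e,f})" "F - {e,f} \<in> Pow (E-{e,f})" using assms by auto
    then show "F \<in> (\<lambda>A. A0 \<union> A) ` Pow (E-{e,f})" by blast
  qed (use assms in auto)
  have inj: "inj_on (\<lambda>A. A0 \<union> A) (Pow (E-{e,f}))"
    using assms(3) by (intro inj_onI) blast
  have "finite A0" using assms(3) by (metis finite.emptyI finite.insertI finite_Un)
  moreover have "finite A \<and> A0 \<inter> A = {}" if "A \<in> Pow (E-{e,f})" for A
    using that assms(1,3) rev_finite_subset[of E A] by auto
  ultimately show ?thesis
    unfolding Tpoly_def image sum.reindex[OF inj] by (intro sum.cong) (simp_all add: xmon_union)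
qed

lemma Tpoly_cross_diff:
  fixes V :: "'v set" and ends :: "'e \<Rightarrow> 'v \<times> 'v"
  assumes "finite E" "e \<in> E" "f \<in> E" "e \<noteq> f"
  defines "k \<equiv> ncomp V ends"
  shows "Tpoly V E ends {e} {f} * Tpoly V E ends {f} {e} - Tpoly V E ends {e,f} {} * Tpoly V E ends {} {e,f}
    = (\<Sum>A\<in>Pow (E-{e,f}). \<Sum>B\<in>Pow (E-{e,f}). Poly_Mapping.single (xmon {e,f} + (xmon A + xmon B))
        (monom 1 (k (insert e A) + k (insert f B)) - monom 1 (k (insert e (insert f A)) + k B)))"
proof -
  have split: "Tpoly V E ends A0 B0 = (\<Sum>A\<in>Pow (E-{e,f}).
     Poly_Mapping.single (xmon A0 + xmon A) (monom 1 (k (A0 \<union> A))))"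
    if "A0 \<union> B0 = {e,f}" "A0 \<inter> B0 = {}" for A0 B0
    using Tpoly_split[OF assms(1) _ that] assms(2,3) unfolding k_def by simp
  have "{e} \<union> {f} = {e,f}" "{e} \<inter> {f} = {}" "{f} \<union> {e} = {e,f}" "{f} \<inter> {e} = {}"
    using assms(4) by auto
  note T_e = split[OF this(1,2)] and T_f = split[OF this(3,4)]
  note T_ef = split[of "{e,f}" "{}", simplified] and T_none = split[of "{}" "{e,f}", simplified]
  have ef: "xmon {e,f} = xmon {e} + xmon {f}" and "xmon {} = 0"
    using assms(4) by (simp_all add: xmon_def)
  have prod_ef: "Tpoly V E ends {e} {f} * Tpoly V E ends {f} {e} = (\<Sum>A\<in>Pow (E-{e,f}). \<Sum>B\<in>Pow (E-{e,f}).
      Poly_Mapping.single (xmon {e,f} + (xmon A + xmon B)) (monom 1 (k (insert e A) + k (insert f B))))"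
    unfolding T_e T_f sum_product by (simp add: mult_single mult_monom ef ac_simps)
  have prod_both: "Tpoly V E ends {e,f} {} * Tpoly V E ends {} {e,f} = (\<Sum>A\<in>Pow (E-{e,f}). \<Sum>B\<in>Pow (E-{e,f}).
      Poly_Mapping.single (xmon {e,f} + (xmon A + xmon B)) (monom 1 (k (insert e (insert f A)) + k B)))"
    unfolding T_ef T_none sum_product by (simp add: mult_single mult_monom \<open>xmon {} = 0\<close> ac_simps)
  show ?thesis
    unfolding prod_ef prod_both by (simp add: single_diff sum_subtractf)
qed

lemma Mpoly_sum_pairs:
  assumes "finite E" "e \<in> E" "f \<in> E" "e \<noteq> f"
  obtains r where "Mpoly V E ends e f = (\<Sum>A\<in>Pow (E-{e,f}). \<Sum>B\<in>Pow (E-{e,f}).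
    Poly_Mapping.single (xmon A + xmon B) (r A B))"
proof -
  define k where "k = ncomp V ends"
  define c :: "int poly" where "c = 1 - [:0,1:]"
  obtain d where d: "\<And>a b. monom (1::int) a - monom 1 b = c * d a b"
    using one_minus_dvd_power_diff[of "[:0,1:]::int poly"]
    unfolding c_def monom_altdef dvd_def by (metis smult_1_left)
  define r where "r A B = d (k (insert e A) + k (insert f B)) (k (insert e (insert f A)) + k B)" for A B
  have "Mpoly V E ends e f = (\<Sum>A\<in>Pow (E-{e,f}). \<Sum>B\<in>Pow (E-{e,f}).
    Poly_Mapping.single (xmon A + xmon B) (r A B))"
  proof (rule Mpoly_eqI[OF assms(4)])
    show "Tpoly V E ends {e} {f} * Tpoly V E ends {f} {e} - Tpoly V E ends {e,f} {} * Tpoly V E ends {} {e,f}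
      = xvar e * xvar f * Poly_Mapping.single 0 (1 - [:0,1:]) * (\<Sum>A\<in>Pow (E-{e,f}). \<Sum>B\<in>Pow (E-{e,f}).
          Poly_Mapping.single (xmon A + xmon B) (r A B))"
      unfolding Tpoly_cross_diff[OF assms] xvar_mult_xvar[OF assms(4)] r_def d k_def[symmetric] c_def[symmetric]
      by (simp add: sum_distrib_left mult_single)
  qed
  then show thesis by (rule that)
qed

lemma keys_eval_q1: "Poly_Mapping.keys (eval_q1 P) \<subseteq> Poly_Mapping.keys P"
  by (auto simp: eval_q1_def in_keys_iff map.rep_eq when_def)

lemma keys_MpolyE:
  assumes "finite E" "e \<in> E" "f \<in> E" "e \<noteq> f"
    and "m \<in> Poly_Mapping.keys (Mpoly V E ends e f)"
  obtains A B where "m = xmon A + xmon B"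
proof -
  obtain r where "Mpoly V E ends e f = (\<Sum>A\<in>Pow (E-{e,f}). \<Sum>B\<in>Pow (E-{e,f}).
    Poly_Mapping.single (xmon A + xmon B) (r A B))"
    using Mpoly_sum_pairs[OF assms(1-4)] .
  with assms(5) obtain A where "m \<in> Poly_Mapping.keys (\<Sum>B\<in>Pow (E-{e,f}).
      Poly_Mapping.single (xmon A + xmon B) (r A B))"
    using keys_sum by force
  then obtain B where "m \<in> Poly_Mapping.keys (Poly_Mapping.single (xmon A + xmon B) (r A B))"
    using keys_sum by force
  then show thesis
    using that by (auto split: if_splits)
qed

lemma keys_SpolyE:
  assumes "m \<in> Poly_Mapping.keys (Spoly V E ends e f)"
  obtains \<beta> \<gamma> \<alpha> \<alpha>' where "m = xmon \<beta> + xmon \<gamma> + (xmon \<alpha> + xmon \<alpha>')"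
    and "\<beta> \<inter> \<gamma> = {}" "\<alpha> \<inter> (\<beta> \<union> \<gamma>) = {}" "\<alpha>' \<inter> (\<beta> \<union> \<gamma>) = {}"
proof -
  from assms obtain \<beta> \<gamma> where "\<beta> \<inter> \<gamma> = {}" and "m \<in> Poly_Mapping.keys
      (Poly_Mapping.single (xmon \<beta> + xmon \<gamma>) 1 * (\<Sum>m'\<in>Bset V E ends e f \<beta> \<gamma>. Poly_Mapping.single m' (1::int)))"
    unfolding Spoly_def by (auto dest!: keys_sum[THEN subsetD])
  moreover from this(2) obtain m' where "m' \<in> Bset V E ends e f \<beta> \<gamma>"
    and "m = xmon \<beta> + xmon \<gamma> + m'"
    unfolding sum_distrib_left mult_single using keys_sum by (force split: if_splits)
  moreover from this(1) obtain \<alpha> \<alpha>' where "m' = xmon \<alpha> + xmon \<alpha>'" and "twins V E ends e f \<beta> \<gamma> \<alpha> \<alpha>'"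
    unfolding Bset_def by blast
  moreover from this(2) have "\<alpha> \<inter> (\<beta> \<union> \<gamma>) = {}" "\<alpha>' \<inter> (\<beta> \<union> \<gamma>) = {}"
    unfolding twins_def Aset_def by auto
  ultimately show thesis
    using that by blast
qed

theorem lemma4p1:
  fixes V :: "'v set" and E :: "'e set" and ends :: "'e \<Rightarrow> 'v \<times> 'v" and e f :: 'e
  assumes "finite V" and "finite E"
    and "\<forall>g\<in>E. fst (ends g) \<in> V \<and> snd (ends g) \<in> V"
    and "e \<in> E" and "f \<in> E" and "e \<noteq> f"
  shows "(\<forall>m g. Poly_Mapping.lookup (eval_q1 (Mpoly V E ends e f)) m \<noteq> 0 \<longrightarrow> Poly_Mapping.lookup m g \<le> 2)
    \<and> (\<forall>m g. Poly_Mapping.lookup (Spoly V E ends e f) m \<noteq> 0 \<longrightarrow> Poly_Mapping.lookup m g \<le> 2)"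
proof (intro conjI allI impI)
  fix m g
  assume "Poly_Mapping.lookup (eval_q1 (Mpoly V E ends e f)) m \<noteq> 0"
  then have "m \<in> Poly_Mapping.keys (Mpoly V E ends e f)"
    using keys_eval_q1 by (metis in_keys_iff subsetD)
  then obtain A B where "m = xmon A + xmon B"
    using keys_MpolyE assms(2,4-6) by metis
  then show "Poly_Mapping.lookup m g \<le> 2"
    by (simp add: lookup_add lookup_xmon)
next
  fix m g
  assume "Poly_Mapping.lookup (Spoly V E ends e f) m \<noteq> 0"
  then obtain \<beta> \<gamma> \<alpha> \<alpha>' where "m = xmon \<beta> + xmon \<gamma> + (xmon \<alpha> + xmon \<alpha>')"
    and "\<beta> \<inter> \<gamma> = {}" "\<alpha> \<inter> (\<beta> \<union> \<gamma>) = {}" "\<alpha>' \<inter> (\<beta> \<union> \<gamma>) = {}"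
    by (rule keys_SpolyE[OF in_keys_iff[THEN iffD2]])
  then show "Poly_Mapping.lookup m g \<le> 2"
    by (auto simp: lookup_add lookup_xmon)
qed

end
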